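(* Let $\pi$ be a projective plane of order $q$ and let $n>1$ be a natural number. Then any embedding $\phi$ of the complete bipartite graph $K_{s,t}$ into $\pi$, where $s\ge q-n$ and $t>n^2+n+1$, maps the vertex class of size $t$ to a set of points lying on a single line.
   Context: A finite projective plane of order $q$ has $q^2+q+1$ points and lines, $q+1$ points on each line and $q+1$ lines through each point; any two distinct points lie on a unique line and any two lines meet in a unique point. An embedding of a simple graph $G=(V,E)$ into $\pi$ is an injective map $\phi$ from $V$ to the points of $\pi$ such that the induced map sending an edge $ab$ to the line through $\phi(a),\phi(b)$ is injective on $E$. *)

theory Defs
  imports Main
begin

(* A projective plane of order q, lines represented as sets of points
   (incidence = membership). *)
definition projective_plane :: "'p set \<Rightarrow> 'p set set \<Rightarrow> nat \<Rightarrow> bool" where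
  "projective_plane P L q \<longleftrightarrow>
     finite P \<and> (\<forall>l\<in>L. l \<subseteq> P) \<and>
     card P = q^2 + q + 1 \<and> card L = q^2 + q + 1 \<and>
     (\<forall>l\<in>L. card l = q + 1) \<and>
     (\<forall>p\<in>P. card {l\<in>L. p \<in> l} = q + 1) \<and>
     (\<forall>p\<in>P. \<forall>r\<in>P. p \<noteq> r \<longrightarrow> (\<exists>!l. l \<in> L \<and> p \<in> l \<and> r \<in> l)) \<and>
     (\<forall>l\<in>L. \<forall>m\<in>L. l \<noteq> m \<longrightarrow> (\<exists>!p. p \<in> P \<and> p \<in> l \<and> p \<in> m))"

definition edge_line :: "'p set set \<Rightarrow> ('v \<Rightarrow> 'p) \<Rightarrow> 'v set \<Rightarrow> 'p set" where
  "edge_line L \<phi> e = (THE l. l \<in> L \<and> \<phi> ` e \<subseteq> l)"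

definition graph_embedding ::
  "'p set \<Rightarrow> 'p set set \<Rightarrow> 'v set \<Rightarrow> 'v set set \<Rightarrow> ('v \<Rightarrow> 'p) \<Rightarrow> bool" where
  "graph_embedding P L V E \<phi> \<longleftrightarrow>
     inj_on \<phi> V \<and> \<phi> ` V \<subseteq> P \<and> inj_on (edge_line L \<phi>) E"

definition complete_bipartite_edges :: "'v set \<Rightarrow> 'v set \<Rightarrow> 'v set set" where
  "complete_bipartite_edges A B = {{a, b} | a b. a \<in> A \<and> b \<in> B}"

end

theory Submission
  imports Defs
begin

text \<open>Let \<open>X = \<phi> ` B\<close>. Through a point \<open>\<phi> b\<close> of \<open>X\<close> pass the \<open>s\<close> pairwise distinct lines
  \<open>\<phi> a \<phi> b\<close> (\<open>a \<in> A\<close>), none of which meets \<open>X\<close> again, so at most \<open>q + 1 - s \<le> n + 1\<close> lines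
  through \<open>\<phi> b\<close> are secants of \<open>X\<close>. If \<open>X\<close> were not collinear, every line \<open>l\<close> would meet \<open>X\<close>
  in at most \<open>n + 1\<close> points (join them to a point of \<open>X\<close> off \<open>l\<close>), and the secants through one
  point of \<open>X\<close> would cover \<open>X\<close> with at most \<open>(n + 1) n + 1\<close> points, contradicting \<open>t > n\<^sup>2 + n + 1\<close>.\<close>

locale linear_space =
  fixes P :: "'p set" and L :: "'p set set"
  assumes finite_lines: "finite L"
    and line_subset: "l \<in> L \<Longrightarrow> l \<subseteq> P"
    and unique_line: "\<lbrakk>p \<in> P; r \<in> P; p \<noteq> r\<rbrakk> \<Longrightarrow> \<exists>!l. l \<in> L \<and> p \<in> l \<and> r \<in> l"
begin

definition line_through :: "'p \<Rightarrow> 'p \<Rightarrow> 'p set" where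
  "line_through x y = (THE l. l \<in> L \<and> x \<in> l \<and> y \<in> l)"

definition secants :: "'p set \<Rightarrow> 'p \<Rightarrow> 'p set set" where
  "secants X b = {l \<in> L. b \<in> l \<and> (\<exists>x\<in>X. x \<noteq> b \<and> x \<in> l)}"

lemma line_through:
  assumes "x \<in> P" "y \<in> P" "x \<noteq> y"
  shows "line_through x y \<in> L" "x \<in> line_through x y" "y \<in> line_through x y"
  using theI'[OF unique_line[OF assms]] unfolding line_through_def by auto

lemma line_through_eq:
  assumes "x \<in> P" "y \<in> P" "x \<noteq> y" "l \<in> L" "x \<in> l" "y \<in> l"
  shows "line_through x y = l"
  unfolding line_through_def using the1_equality[OF unique_line[OF assms(1-3)]] assms(4-6) by blast

lemma edge_line_eq_line_through: "edge_line L \<phi> {a, b} = line_through (\<phi> a) (\<phi> b)"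
  unfolding edge_line_def line_through_def by simp

lemma finite_secants: "finite (secants X b)"
  unfolding secants_def using finite_lines by simp

text \<open>Joining \<open>c\<close> to the points of \<open>l \<inter> X\<close> gives distinct secants through \<open>c\<close>.\<close>
lemma card_inter_line_le_card_secants:
  assumes "l \<in> L" "X \<subseteq> P" "c \<in> X" "c \<notin> l"
  shows "card (l \<inter> X) \<le> card (secants X c)"
proof -
  have joins: "line_through c x \<in> L" "c \<in> line_through c x" "x \<in> line_through c x"
    if "x \<in> l \<inter> X" for x
  proof -
    have "c \<in> P" "x \<in> P" "c \<noteq> x" using that assms line_subset by blast+
    then show "line_through c x \<in> L" "c \<in> line_through c x" "x \<in> line_through c x"
      by (fact line_through)+
  qed
  have "inj_on (line_through c) (l \<inter> X)"
  proof
    fix x y assume x: "x \<in> l \<inter> X" and y: "y \<in> l \<inter> X" and eq: "line_through c x = line_through c y"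
    show "x = y"
    proof (rule ccontr)
      assume "x \<noteq> y"
      moreover have "x \<in> P" "y \<in> P" using x y assms(2) by blast+
      moreover have "y \<in> line_through c x" using eq joins[OF y] by simp
      ultimately have "line_through x y = line_through c x" "line_through x y = l"
        using line_through_eq joins[OF x] x y \<open>l \<in> L\<close> by blast+
      then show False using joins[OF x] assms(4) by simp
    qed
  qed
  moreover have "line_through c ` (l \<inter> X) \<subseteq> secants X c"
  proof (rule image_subsetI)
    fix x assume x: "x \<in> l \<inter> X"
    then have "x \<noteq> c" using assms(4) by blast
    then show "line_through c x \<in> secants X c"
      unfolding secants_def using joins[OF x] x by blast
  qed
  ultimately show ?thesis using card_inj_on_le[OF _ _ finite_secants] by blast
qed

theorem card_le_if_few_secants:
  assumes "X \<subseteq> P" "finite X" "\<forall>l\<in>L. \<not> X \<subseteq> l"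
    and secants_le: "\<forall>b\<in>X. card (secants X b) \<le> k + 1"
  shows "card X \<le> k\<^sup>2 + k + 1"
proof (cases "X = {}")
  case False
  then obtain b where b: "b \<in> X" by blast
  have line_meets: "card (l \<inter> X) \<le> k + 1" if "l \<in> L" for l
  proof -
    have "\<not> X \<subseteq> l" using assms(3) that by simp
    then obtain c where c: "c \<in> X" "c \<notin> l" by blast
    have "card (l \<inter> X) \<le> card (secants X c)"
      using card_inter_line_le_card_secants[OF that assms(1) c] .
    also have "\<dots> \<le> k + 1" using secants_le c(1) by simp
    finally show ?thesis .
  qed
  have "X - {b} \<subseteq> (\<Union>l\<in>secants X b. l \<inter> X - {b})"
  proof
    fix x assume x: "x \<in> X - {b}"
    then have "b \<in> P" "x \<in> P" "b \<noteq> x" using assms(1) b by auto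
    then have "line_through b x \<in> secants X b" "x \<in> line_through b x"
      using line_through[of b x] x unfolding secants_def by auto
    then show "x \<in> (\<Union>l\<in>secants X b. l \<inter> X - {b})" using x by blast
  qed
  then have "card (X - {b}) \<le> card (\<Union>l\<in>secants X b. l \<inter> X - {b})"
    using assms(2) finite_secants by (intro card_mono) auto
  also have "\<dots> \<le> (\<Sum>l\<in>secants X b. card (l \<inter> X - {b}))"
    by (rule card_UN_le[OF finite_secants])
  also have "\<dots> \<le> (\<Sum>l\<in>secants X b. k)"
  proof (rule sum_mono)
    fix l assume "l \<in> secants X b"
    then have "l \<in> L" "b \<in> l \<inter> X" using b unfolding secants_def by auto
    then show "card (l \<inter> X - {b}) \<le> k"
      using line_meets[of l] by (simp add: card_Diff_singleton)
  qed
  also have "\<dots> = card (secants X b) * k" by simp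
  also have "\<dots> \<le> (k + 1) * k"
    using secants_le b by (intro mult_right_mono) auto
  finally show ?thesis
    using b assms(2) by (simp add: card_Diff_singleton power2_eq_square)
qed simp

end

lemma projective_plane_linear_space:
  assumes "projective_plane P L q"
  shows "linear_space P L"
proof
  have "card L = q\<^sup>2 + q + 1" using assms by (simp add: projective_plane_def)
  then show "finite L" by (intro card_ge_0_finite) simp
  show "l \<subseteq> P" if "l \<in> L" for l
    using assms that by (simp add: projective_plane_def)
  show "\<exists>!l. l \<in> L \<and> p \<in> l \<and> r \<in> l" if "p \<in> P" "r \<in> P" "p \<noteq> r" for p r
    using assms that by (simp add: projective_plane_def)
qed

lemma bipartite_embedding_edge_line_inj:
  assumes "graph_embedding P L V (complete_bipartite_edges A B) \<phi>" "A \<inter> B = {}"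
    and "a \<in> A" "b \<in> B" "a' \<in> A" "b' \<in> B"
    and "edge_line L \<phi> {a, b} = edge_line L \<phi> {a', b'}"
  shows "a = a' \<and> b = b'"
proof -
  have "{a, b} \<in> complete_bipartite_edges A B" "{a', b'} \<in> complete_bipartite_edges A B"
    using assms(3-6) unfolding complete_bipartite_edges_def by auto
  then have "{a, b} = {a', b'}"
    using assms(1,7) unfolding graph_embedding_def by (meson inj_onD)
  then show ?thesis using assms(2-6) by (auto simp: doubleton_eq_iff)
qed

text \<open>The lines \<open>\<phi> a \<phi> \<beta>\<close>, \<open>a \<in> A\<close>, are distinct and are not secants of \<open>\<phi> ` B\<close>.\<close>
lemma card_secants_bipartite_embedding:
  assumes plane: "projective_plane P L q"
    and emb: "graph_embedding P L (A \<union> B) (complete_bipartite_edges A B) \<phi>"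
    and "A \<inter> B = {}" "finite A" "\<beta> \<in> B"
  shows "card A + card (linear_space.secants L (\<phi> ` B) (\<phi> \<beta>)) \<le> q + 1"
proof -
  interpret linear_space P L using projective_plane_linear_space[OF plane] .
  have imP: "\<phi> x \<in> P" if "x \<in> A \<union> B" for x
    using emb that unfolding graph_embedding_def by auto
  have distinct: "\<phi> a \<noteq> \<phi> b" if "a \<in> A" "b \<in> B" for a b
    using emb that \<open>A \<inter> B = {}\<close> unfolding graph_embedding_def by (auto dest: inj_onD)
  define f where "f a = line_through (\<phi> a) (\<phi> \<beta>)" for a
  have f: "f a \<in> L" "\<phi> a \<in> f a" "\<phi> \<beta> \<in> f a" if "a \<in> A" for a
    unfolding f_def using line_through imP distinct that \<open>\<beta> \<in> B\<close> by auto
  have edge_line_f: "edge_line L \<phi> {a, b} = f a" if "a \<in> A" "b \<in> B" "\<phi> b \<in> f a" for a b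
  proof -
    have "\<phi> a \<in> P" "\<phi> b \<in> P" "\<phi> a \<noteq> \<phi> b" using imP distinct that by auto
    then show ?thesis
      using edge_line_eq_line_through line_through_eq f that by metis
  qed
  have "inj_on f A"
  proof
    fix a a' assume "a \<in> A" "a' \<in> A" "f a = f a'"
    then have "edge_line L \<phi> {a, \<beta>} = edge_line L \<phi> {a', \<beta>}"
      using edge_line_f f \<open>\<beta> \<in> B\<close> by metis
    then show "a = a'"
      using bipartite_embedding_edge_line_inj[OF emb \<open>A \<inter> B = {}\<close>] \<open>a \<in> A\<close> \<open>a' \<in> A\<close> \<open>\<beta> \<in> B\<close>
      by blast
  qed
  moreover have "f ` A \<inter> secants (\<phi> ` B) (\<phi> \<beta>) = {}"
  proof (rule ccontr)
    assume "f ` A \<inter> secants (\<phi> ` B) (\<phi> \<beta>) \<noteq> {}"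
    then obtain a \<beta>' where a: "a \<in> A" "\<beta>' \<in> B" "\<phi> \<beta>' \<noteq> \<phi> \<beta>" "\<phi> \<beta>' \<in> f a"
      unfolding secants_def by auto
    then have "edge_line L \<phi> {a, \<beta>'} = edge_line L \<phi> {a, \<beta>}"
      using edge_line_f f \<open>\<beta> \<in> B\<close> by metis
    then show False
      using bipartite_embedding_edge_line_inj[OF emb \<open>A \<inter> B = {}\<close>] a \<open>\<beta> \<in> B\<close> by blast
  qed
  moreover have "f ` A \<union> secants (\<phi> ` B) (\<phi> \<beta>) \<subseteq> {l \<in> L. \<phi> \<beta> \<in> l}"
    using f unfolding secants_def by auto
  then have "card (f ` A \<union> secants (\<phi> ` B) (\<phi> \<beta>)) \<le> card {l \<in> L. \<phi> \<beta> \<in> l}"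
    by (rule card_mono[rotated]) (simp add: finite_lines)
  moreover have "card {l \<in> L. \<phi> \<beta> \<in> l} = q + 1"
    using plane imP \<open>\<beta> \<in> B\<close> unfolding projective_plane_def by auto
  moreover have "card (f ` A \<union> secants (\<phi> ` B) (\<phi> \<beta>)) = card A + card (secants (\<phi> ` B) (\<phi> \<beta>))"
    using card_Un_disjoint[OF _ finite_secants] card_image[of f A] \<open>finite A\<close> calculation(1,2) by simp
  ultimately show ?thesis by linarith
qed

theorem corollary4p5:
  fixes P :: "'p set" and L :: "'p set set" and q n s t :: nat
    and A B :: "'v set" and \<phi> :: "'v \<Rightarrow> 'p"
  assumes "projective_plane P L q"
    and "n > 1"
    and "finite A" "finite B" "A \<inter> B = {}"
    and "card A = s" "card B = t"
    and "s \<ge> q - n" "t > n^2 + n + 1"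
    and "graph_embedding P L (A \<union> B) (complete_bipartite_edges A B) \<phi>"
  shows "\<exists>l\<in>L. \<phi> ` B \<subseteq> l"
proof (rule ccontr)
  assume noncollinear: "\<not> (\<exists>l\<in>L. \<phi> ` B \<subseteq> l)"
  interpret linear_space P L using projective_plane_linear_space[OF assms(1)] .
  have "\<phi> ` B \<subseteq> P" and inj: "inj_on \<phi> B"
    using assms(10) unfolding graph_embedding_def by (auto intro: inj_on_subset)
  moreover have "card (secants (\<phi> ` B) (\<phi> \<beta>)) \<le> n + 1" if "\<beta> \<in> B" for \<beta>
    using card_secants_bipartite_embedding[OF assms(1,10,5,3) that] assms(6,8) by linarith
  ultimately have "card (\<phi> ` B) \<le> n\<^sup>2 + n + 1"
    using card_le_if_few_secants[of "\<phi> ` B" n] noncollinear \<open>finite B\<close> by blast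
  then show False
    using card_image[OF inj] assms(7,9) by simp
qed

end
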